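(* Let $K$ be a perfect field, $k\subset K$ a subfield, and $\lambda\in\operatorname{Emb}(K)$ with $|\lambda^G|=n<\infty$. Let $\overline{\lambda}$ be an extension of $\lambda$ to $\overline{K}$, let $\overline{\mu}$ be the inverse of $\overline{\lambda}$, and let $\mu=\overline{\mu}|_K$. Then $\overline{\lambda}$ induces an isomorphism of two-sided vector spaces ${}_{\mu}(\mu(K)\vee K)_{\operatorname{id}}\to V(\lambda)$.
   Context: $\overline{K}$ is a fixed algebraic closure of $K$. A two-sided vector space is a $K\otimes_kK$-module. $\operatorname{Emb}(K)$ is the set of $k$-linear field embeddings $K\to\overline{K}$; $G=\operatorname{Aut}(\overline{K}/K)$ acts by left composition, with orbits $\lambda^G$. $K(\lambda)$ is the composite of $K$ and $\lambda(K)$ in $\overline{K}$, and $V(\lambda)$ is the two-sided vector space with underlying set $K(\lambda)$ and action $a\cdot v\cdot b=av\lambda(b)$. $\mu(K)\vee K$ denotes the composite of $\mu(K)$ and $K$ in $\overline{K}$. For $k$-linear embeddings $\gamma,\delta$ of $K$ into a field $L$, ${}_\gamma L_\delta$ is the two-sided vector space with underlying set $L$ and action $(a\otimes b)\cdot c=\gamma(a)\delta(b)c$. *)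

theory Defs
  imports "HOL-Computational_Algebra.Polynomial" "HOL-Library.FuncSet"
begin

text \<open>Throughout, the ambient type 'a plays the role of the fixed algebraic closure of K;
  the fields k and K are subfields (subsets) of it.\<close>

definition is_subfield :: "'a::field set \<Rightarrow> bool" where
  "is_subfield S \<longleftrightarrow> 0 \<in> S \<and> 1 \<in> S \<and>
     (\<forall>x\<in>S. \<forall>y\<in>S. x + y \<in> S \<and> x * y \<in> S) \<and>
     (\<forall>x\<in>S. - x \<in> S \<and> inverse x \<in> S)"

definition composite :: "'a::field set \<Rightarrow> 'a set \<Rightarrow> 'a set" where
  "composite A B = \<Inter> {S. is_subfield S \<and> A \<union> B \<subseteq> S}"

definition alg_closed_type :: "'a::field itself \<Rightarrow> bool" where
  "alg_closed_type _ \<longleftrightarrow> (\<forall>p :: 'a poly. degree p > 0 \<longrightarrow> (\<exists>x. poly p x = 0))"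

definition algebraic_over :: "'a::field set \<Rightarrow> 'a \<Rightarrow> bool" where
  "algebraic_over K x \<longleftrightarrow> (\<exists>p. p \<noteq> 0 \<and> (\<forall>i. coeff p i \<in> K) \<and> poly p x = 0)"

definition is_algebraic_closure_of :: "'a::field set \<Rightarrow> bool" where
  "is_algebraic_closure_of K \<longleftrightarrow> alg_closed_type TYPE('a) \<and> (\<forall>x. algebraic_over K x)"

definition perfect_field :: "'a::field set \<Rightarrow> bool" where
  "perfect_field K \<longleftrightarrow> CHAR('a) = 0 \<or> (\<forall>x\<in>K. \<exists>y\<in>K. y ^ CHAR('a) = x)"

definition Emb :: "'a::field set \<Rightarrow> 'a set \<Rightarrow> ('a \<Rightarrow> 'a) set" where
  "Emb k K = {f. (\<forall>x. x \<notin> K \<longrightarrow> f x = undefined) \<and> f 1 = 1 \<and>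
      (\<forall>x\<in>K. \<forall>y\<in>K. f (x + y) = f x + f y \<and> f (x * y) = f x * f y) \<and>
      (\<forall>c\<in>k. \<forall>x\<in>K. f (c * x) = c * f x)}"

definition field_endo :: "('a::field \<Rightarrow> 'a) \<Rightarrow> bool" where
  "field_endo f \<longleftrightarrow> f 1 = 1 \<and> (\<forall>x y. f (x + y) = f x + f y \<and> f (x * y) = f x * f y)"

definition Gal :: "'a::field set \<Rightarrow> ('a \<Rightarrow> 'a) set" where
  "Gal K = {\<sigma>. bij \<sigma> \<and> field_endo \<sigma> \<and> (\<forall>x\<in>K. \<sigma> x = x)}"

definition orbit :: "'a::field set \<Rightarrow> ('a \<Rightarrow> 'a) \<Rightarrow> ('a \<Rightarrow> 'a) set" where
  "orbit K lam = {restrict (\<sigma> \<circ> lam) K | \<sigma>. \<sigma> \<in> Gal K}"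

text \<open>Action of a pure tensor a \<otimes> b on the two-sided space _\<gamma> L _\<delta>:
  (a \<otimes> b) \<cdot> c = \<gamma>(a) \<delta>(b) c.\<close>
definition tw_act :: "('a::field \<Rightarrow> 'a) \<Rightarrow> ('a \<Rightarrow> 'a) \<Rightarrow> 'a \<Rightarrow> 'a \<Rightarrow> 'a \<Rightarrow> 'a" where
  "tw_act \<gamma> \<delta> a b c = \<gamma> a * \<delta> b * c"

text \<open>Isomorphism of two-sided K-vector spaces (K \<otimes>_k K-modules) given by underlying sets V, W
  and actions of pure tensors; since pure tensors generate K \<otimes>_k K additively, an additive
  bijection compatible with pure tensors is exactly a module isomorphism.\<close>
definition tsv_iso ::
  "'a::field set \<Rightarrow> 'a set \<Rightarrow> ('a \<Rightarrow> 'a \<Rightarrow> 'a \<Rightarrow> 'a) \<Rightarrow> 'a set \<Rightarrow> ('a \<Rightarrow> 'a \<Rightarrow> 'a \<Rightarrow> 'a)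
     \<Rightarrow> ('a \<Rightarrow> 'a) \<Rightarrow> bool" where
  "tsv_iso K V actV W actW f \<longleftrightarrow> bij_betw f V W \<and>
     (\<forall>x\<in>V. \<forall>y\<in>V. f (x + y) = f x + f y) \<and>
     (\<forall>a\<in>K. \<forall>b\<in>K. \<forall>v\<in>V. f (actV a b v) = actW a b (f v))"

end

theory Submission
  imports Defs
begin

text \<open>A field automorphism \<sigma> of the ambient field maps the composite of two subsets onto the
  composite of their images, and it carries the two-sided space L with action
  \<open>(a \<otimes> b) \<cdot> c = \<gamma>(a) \<delta>(b) c\<close> isomorphically onto \<sigma>(L) with action
  \<open>(a \<otimes> b) \<cdot> c = \<sigma>(\<gamma>(a)) \<sigma>(\<delta>(b)) c\<close>. For \<open>\<sigma> = \<lambda>\<close>, \<open>\<gamma> = \<mu>\<close>, \<open>\<delta> = id\<close> and \<open>L = \<mu>(K) \<or> K\<close>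
  this is \<open>\<lambda>(L) = K \<or> \<lambda>(K)\<close> with \<open>\<sigma>\<gamma> = id\<close> and \<open>\<sigma>\<delta> = \<lambda>\<close> on K, i.e. V(\<lambda>).\<close>

lemma field_endo_0:
  assumes "field_endo f"
  shows "f 0 = 0"
proof -
  have "f 0 + f 0 = f 0 + 0"
    using assms unfolding field_endo_def by (metis add_0 add_0_right)
  then show ?thesis by (rule add_left_imp_eq)
qed

lemma field_endo_minus:
  assumes "field_endo f"
  shows "f (- x) = - f x"
proof -
  have "f x + f (- x) = 0"
    using assms field_endo_0[OF assms] unfolding field_endo_def by (metis add.right_inverse)
  then show ?thesis by (simp add: eq_neg_iff_add_eq_0 add.commute)
qed

lemma field_endo_inverse:
  assumes "field_endo f"
  shows "f (inverse x) = inverse (f x)"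
proof (cases "x = 0")
  case True
  then show ?thesis using field_endo_0[OF assms] by simp
next
  case False
  then have "f x * f (inverse x) = 1"
    using assms unfolding field_endo_def by (metis right_inverse)
  then show ?thesis by (metis inverse_unique)
qed

lemma field_endo_inj:
  assumes "field_endo f"
  shows "inj f"
proof (rule injI)
  fix x y assume "f x = f y"
  then have "f (x - y) = 0"
    using assms field_endo_minus[OF assms] unfolding field_endo_def
    by (metis diff_conv_add_uminus right_minus)
  then have "f ((x - y) * inverse (x - y)) = 0"
    using assms unfolding field_endo_def by simp
  moreover have "f 1 = 1" using assms unfolding field_endo_def by simp
  ultimately show "x = y" by (metis right_inverse right_minus_eq zero_neq_one)
qed

lemma field_endo_inv:
  assumes "field_endo f" and "bij f"
  shows "field_endo (inv f)"
proof -
  have f_inv: "\<And>y. f (inv f y) = y" and inv_f: "\<And>x. inv f (f x) = x"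
    using assms(2) by (simp_all add: bij_is_surj surj_f_inv_f bij_is_inj)
  show ?thesis
    using assms(1) unfolding field_endo_def by (metis f_inv inv_f)
qed

lemma is_subfield_vimage:
  assumes "field_endo f" and "is_subfield T"
  shows "is_subfield (f -` T)"
  using assms field_endo_0[OF assms(1)] field_endo_minus[OF assms(1)]
    field_endo_inverse[OF assms(1)]
  unfolding is_subfield_def field_endo_def by auto

lemma image_composite_subset:
  assumes "field_endo f"
  shows "f ` composite A B \<subseteq> composite (f ` A) (f ` B)"
proof
  fix y assume "y \<in> f ` composite A B"
  then obtain x where x: "x \<in> composite A B" and y: "y = f x" by auto
  show "y \<in> composite (f ` A) (f ` B)"
    unfolding composite_def
  proof
    fix T assume "T \<in> {S. is_subfield S \<and> f ` A \<union> f ` B \<subseteq> S}"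
    then have "is_subfield (f -` T)" and "A \<union> B \<subseteq> f -` T"
      using is_subfield_vimage[OF assms] by auto
    then have "x \<in> f -` T" using x unfolding composite_def by blast
    then show "y \<in> T" using y by simp
  qed
qed

lemma image_composite:
  assumes "field_endo f" and "bij f"
  shows "f ` composite A B = composite (f ` A) (f ` B)"
proof
  show "f ` composite A B \<subseteq> composite (f ` A) (f ` B)"
    using assms(1) by (rule image_composite_subset)
  have "inv f ` composite (f ` A) (f ` B) \<subseteq> composite (inv f ` f ` A) (inv f ` f ` B)"
    using field_endo_inv[OF assms] by (rule image_composite_subset)
  also have "\<dots> = composite A B"
    using assms(2) by (simp add: image_comp bij_is_inj)
  finally have "f ` inv f ` composite (f ` A) (f ` B) \<subseteq> f ` composite A B"
    by (rule image_mono)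
  then show "composite (f ` A) (f ` B) \<subseteq> f ` composite A B"
    using assms(2) by (simp add: image_comp bij_is_surj surj_f_inv_f)
qed

lemma tsv_iso_field_endo_image:
  assumes "field_endo f"
  shows "tsv_iso K L (tw_act \<gamma> \<delta>) (f ` L) (tw_act (f \<circ> \<gamma>) (f \<circ> \<delta>)) f"
  using assms inj_on_subset[OF field_endo_inj[OF assms]]
  unfolding tsv_iso_def tw_act_def field_endo_def by (simp add: inj_on_imp_bij_betw)

lemma tsv_iso_tw_act_cong:
  assumes "\<forall>a\<in>K. \<gamma> a = \<gamma>' a" and "\<forall>b\<in>K. \<delta> b = \<delta>' b"
  shows "tsv_iso K V actV W (tw_act \<gamma> \<delta>) f \<longleftrightarrow> tsv_iso K V actV W (tw_act \<gamma>' \<delta>') f"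
  using assms unfolding tsv_iso_def tw_act_def by simp

theorem lemma3p10:
  fixes k K :: "'a::field set" and lam lambar :: "'a \<Rightarrow> 'a" and n :: nat
  assumes "is_subfield K" and "is_subfield k" and "k \<subseteq> K"
    and "is_algebraic_closure_of K"
    and "perfect_field K"
    and "lam \<in> Emb k K"
    and "finite (orbit K lam)" and "card (orbit K lam) = n"
    and "field_endo lambar" and "bij lambar" and "\<forall>x\<in>K. lambar x = lam x"
  shows "tsv_iso K (composite (restrict (inv lambar) K ` K) K)
           (tw_act (restrict (inv lambar) K) id)
           (composite K (lam ` K)) (tw_act id lam) lambar"
proof -
  let ?mu = "restrict (inv lambar) K"
  have lambar_mu: "\<forall>a\<in>K. (lambar \<circ> ?mu) a = id a"
    using assms(10) by (simp add: bij_is_surj surj_f_inv_f)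
  have "lambar ` composite (?mu ` K) K = composite (lambar ` ?mu ` K) (lambar ` K)"
    using assms(9,10) by (rule image_composite)
  also have "\<dots> = composite K (lam ` K)"
    using lambar_mu assms(11) by (simp add: image_comp cong: image_cong)
  finally have "tsv_iso K (composite (?mu ` K) K) (tw_act ?mu id) (composite K (lam ` K))
      (tw_act (lambar \<circ> ?mu) (lambar \<circ> id)) lambar"
    using tsv_iso_field_endo_image[OF assms(9)] by metis
  then show ?thesis
    using tsv_iso_tw_act_cong[of K "lambar \<circ> ?mu" id "lambar \<circ> id" lam] lambar_mu assms(11)
    by simp
qed

end
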